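(* Let $L=2U\oplus A_2$. Then $\widetilde{\operatorname{O}}^+(L)$ acts transitively on the set of isotropic lines in $L\otimes\mathbb{Q}$ and transitively on the set of totally isotropic planes in $L\otimes\mathbb{Q}$. Thus the Tits' building $\mathcal{B}(\widetilde{\operatorname{O}}^+(L))$ consists of one line-node and one plane-node joined by one edge.
   Context: $U$ is the hyperbolic plane, $A_2$ the negative definite root lattice; $L$ has signature $(2,4)$. $\widetilde{\operatorname{O}}(L)$ is the kernel of $\operatorname{O}(L)\to\operatorname{O}(L^{\vee}/L)$; the real spinor norm of a product of reflections $\sigma_{w_1}\cdots\sigma_{w_m}$ is $\prod_i(-(w_i,w_i)/2)\in\mathbb{R}^*/(\mathbb{R}^* )^2$, and $\widetilde{\operatorname{O}}^+(L)$ is the subgroup of $\widetilde{\operatorname{O}}(L)$ of spinor norm $1$. For $G\subset\operatorname{O}^+(L\otimes\mathbb{Q})$, the Tits' building $\mathcal{B}(G)$ is the bipartite graph whose nodes are the $G$-orbits of isotropic lines and the $G$-orbits of totally isotropic planes in $L\otimes\mathbb{Q}$, with an edge between the orbit of a line $\ell$ and the orbit of a plane $\Pi$ iff $g\ell\subset\Pi$ for some $g\in G$. *)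

theory Defs
  imports "HOL-Analysis.Analysis"
begin

text \<open>The lattice L = 2U + A2 is realised as the integer points of real^6, with
  coordinates 0,1 spanning the first copy of U, 2,3 the second copy of U, and 4,5
  the (negative definite) A2.\<close>

definition bfL :: "real^6 \<Rightarrow> real^6 \<Rightarrow> real" where
  "bfL x y = x$0 * y$1 + x$1 * y$0 + x$2 * y$3 + x$3 * y$2
             - 2 * x$4 * y$4 + x$4 * y$5 + x$5 * y$4 - 2 * x$5 * y$5"

definition latL :: "(real^6) set" where
  "latL = {x. \<forall>i. x$i \<in> \<int>}"

definition ratL :: "(real^6) set" where
  "ratL = {x. \<forall>i. x$i \<in> \<rat>}"

definition dualL :: "(real^6) set" where
  "dualL = {v. \<forall>y\<in>latL. bfL v y \<in> \<int>}"

definition int_matrix :: "real^6^6 \<Rightarrow> bool" where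
  "int_matrix g \<longleftrightarrow> (\<forall>i j. g$i$j \<in> \<int>)"

definition OL :: "(real^6^6) set" where
  "OL = {g. int_matrix g \<and> (\<exists>h. int_matrix h \<and> g ** h = mat 1 \<and> h ** g = mat 1)
            \<and> (\<forall>x y. bfL (g *v x) (g *v y) = bfL x y)}"

definition OtildeL :: "(real^6^6) set" where
  "OtildeL = {g\<in>OL. \<forall>v\<in>dualL. g *v v - v \<in> latL}"

definition reflL :: "real^6 \<Rightarrow> real^6 \<Rightarrow> real^6" where
  "reflL w x = x - (2 * bfL x w / bfL w w) *\<^sub>R w"

text \<open>Real spinor norm 1: g is a product of reflections sigma_{w_1}...sigma_{w_m}
  with prod (-(w_i,w_i)/2) a positive real (i.e. trivial in R*/(R*)^2).\<close>
definition spinor_norm_one :: "real^6^6 \<Rightarrow> bool" where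
  "spinor_norm_one g \<longleftrightarrow> (\<exists>ws. (\<forall>w\<in>set ws. bfL w w \<noteq> 0)
       \<and> (\<forall>x. g *v x = foldr reflL ws x)
       \<and> prod_list (map (\<lambda>w. - bfL w w / 2) ws) > 0)"

definition OtildePlusL :: "(real^6^6) set" where
  "OtildePlusL = {g\<in>OtildeL. spinor_norm_one g}"

definition iso_line :: "(real^6) set \<Rightarrow> bool" where
  "iso_line l \<longleftrightarrow> (\<exists>v\<in>ratL. v \<noteq> 0 \<and> bfL v v = 0 \<and> l = {c *\<^sub>R v | c. c \<in> \<rat>})"

definition tot_iso_plane :: "(real^6) set \<Rightarrow> bool" where
  "tot_iso_plane P \<longleftrightarrow> (\<exists>v\<in>ratL. \<exists>w\<in>ratL.
      (\<forall>a\<in>\<rat>. \<forall>b\<in>\<rat>. a *\<^sub>R v + b *\<^sub>R w = 0 \<longrightarrow> a = 0 \<and> b = 0)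
      \<and> bfL v v = 0 \<and> bfL v w = 0 \<and> bfL w w = 0
      \<and> P = {a *\<^sub>R v + b *\<^sub>R w | a b. a \<in> \<rat> \<and> b \<in> \<rat>})"

definition act :: "real^6^6 \<Rightarrow> (real^6) set \<Rightarrow> (real^6) set" where
  "act g S = (\<lambda>x. g *v x) ` S"

definition orbitG :: "(real^6^6) set \<Rightarrow> (real^6) set \<Rightarrow> (real^6) set set" where
  "orbitG G S = {act g S | g. g \<in> G}"

definition line_nodes :: "(real^6^6) set \<Rightarrow> (real^6) set set set" where
  "line_nodes G = orbitG G ` {l. iso_line l}"

definition plane_nodes :: "(real^6^6) set \<Rightarrow> (real^6) set set set" where
  "plane_nodes G = orbitG G ` {P. tot_iso_plane P}"

definition building_edges :: "(real^6^6) set \<Rightarrow> ((real^6) set set \<times> (real^6) set set) set" where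
  "building_edges G = {(orbitG G l, orbitG G P) | l P.
      iso_line l \<and> tot_iso_plane P \<and> (\<exists>g\<in>G. act g l \<subseteq> P)}"

end

theory Submission
  imports Defs
begin

text \<open>
  Write x = (x0, ..., x5) and e_i for the i-th standard basis vector, so that
  (x, x) = 2 (x0 x1 + x2 x3 - N(x4, x5)) with N(a, b) = a^2 - ab + b^2.
  The group contains the reflections in the roots swapping x0, x1 and x2, x3, and the Eichler
  transformations E(e, u) for lattice vectors e isotropic and u orthogonal to e, provided some root
  of A2 is orthogonal to e: for q(u) \<noteq> 0, E(e, u) is a product of two reflections of positive
  spinor norm, and otherwise u can be split into two anisotropic parts along that root.
  An Eichler transformation at e0 reduces x2, ..., x5 modulo x1; since N of two residues mod n lies
  in [0, n^2), isotropy forces the new x0 below |x1|, so swapping x0 and x1 gives a descent ending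
  at x1 = 0. The same descent in the second hyperbolic plane (fixing e0) kills x3, x4, x5, and a
  Euclidean algorithm on (x0, x2) ends at a multiple of e0. Applied to a basis of a totally isotropic
  plane, the second descent brings the other basis vector into the span of e0 and e2.
\<close>

lemma UNIV_6: "(UNIV :: 6 set) = {0, 1, 2, 3, 4, 5}"
  by (rule card_subset_eq[symmetric]) (auto simp: card_insert_if)

lemma all_6: "(\<forall>i::6. P i) \<longleftrightarrow> P 0 \<and> P 1 \<and> P 2 \<and> P 3 \<and> P 4 \<and> P 5"
  by (metis UNIV_6 UNIV_I empty_iff insert_iff)

lemma vec6_eq_iff:
  "(x::real^6) = y \<longleftrightarrow> x$0 = y$0 \<and> x$1 = y$1 \<and> x$2 = y$2 \<and> x$3 = y$3 \<and> x$4 = y$4 \<and> x$5 = y$5"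
  unfolding vec_eq_iff all_6 ..

definition ivec :: "int \<Rightarrow> int \<Rightarrow> int \<Rightarrow> int \<Rightarrow> int \<Rightarrow> int \<Rightarrow> real^6" where
  "ivec a b c d e f = (\<chi> i. of_int (if i = 0 then a else if i = 1 then b else if i = 2 then c
      else if i = 3 then d else if i = 4 then e else f))"

lemma ivec_nth [simp]:
  "ivec a b c d e f $ 0 = of_int a" "ivec a b c d e f $ 1 = of_int b" "ivec a b c d e f $ 2 = of_int c"
  "ivec a b c d e f $ 3 = of_int d" "ivec a b c d e f $ 4 = of_int e" "ivec a b c d e f $ 5 = of_int f"
  by (simp_all add: ivec_def)

lemma ivec_eq_0_iff: "ivec a b c d e f = 0 \<longleftrightarrow> a = 0 \<and> b = 0 \<and> c = 0 \<and> d = 0 \<and> e = 0 \<and> f = 0"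
  by (simp add: vec6_eq_iff)

lemma ivec_0 [simp]: "ivec 0 0 0 0 0 0 = 0"
  by (simp add: vec6_eq_iff)

lemma ivec_e0_eq_scaleR: "ivec n 0 0 0 0 0 = of_int n *\<^sub>R ivec 1 0 0 0 0 0"
  by (simp add: vec6_eq_iff)

lemma latL_iff_ivec: "x \<in> latL \<longleftrightarrow> (\<exists>a b c d e f. x = ivec a b c d e f)"
proof
  assume "x \<in> latL"
  then have "x = ivec \<lfloor>x$0\<rfloor> \<lfloor>x$1\<rfloor> \<lfloor>x$2\<rfloor> \<lfloor>x$3\<rfloor> \<lfloor>x$4\<rfloor> \<lfloor>x$5\<rfloor>"
    unfolding latL_def by (simp add: vec6_eq_iff all_6 del: ivec_nth) (auto elim!: Ints_cases)
  then show "\<exists>a b c d e f. x = ivec a b c d e f" by blast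
qed (auto simp: latL_def all_6)

lemma ivec_latL [simp]: "ivec a b c d e f \<in> latL"
  using latL_iff_ivec by blast

lemma bfL_ivec:
  "bfL (ivec a b c d e f) (ivec a' b' c' d' e' f') =
     of_int (a*b' + b*a' + c*d' + d*c' - 2*e*e' + e*f' + f*e' - 2*f*f')"
  by (simp add: bfL_def)

lemma bfL_sym: "bfL x y = bfL y x"
  by (simp add: bfL_def algebra_simps)

lemma bfL_add_left: "bfL (x + y) z = bfL x z + bfL y z"
  and bfL_add_right: "bfL z (x + y) = bfL z x + bfL z y"
  and bfL_diff_left: "bfL (x - y) z = bfL x z - bfL y z"
  and bfL_diff_right: "bfL z (x - y) = bfL z x - bfL z y"
  and bfL_scaleR_left: "bfL (c *\<^sub>R x) z = c * bfL x z"
  and bfL_scaleR_right: "bfL z (c *\<^sub>R x) = c * bfL z x"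
  and bfL_minus_left: "bfL (- x) z = - bfL x z"
  and bfL_minus_right: "bfL z (- x) = - bfL z x"
  by (simp_all add: bfL_def algebra_simps)

lemmas bfL_linear = bfL_add_left bfL_add_right bfL_diff_left bfL_diff_right
  bfL_scaleR_left bfL_scaleR_right bfL_minus_left bfL_minus_right

definition normA2 :: "int \<Rightarrow> int \<Rightarrow> int" where
  "normA2 a b = a*a - a*b + b*b"

lemma isotropic_ivec_iff:
  "bfL (ivec a b c d e f) (ivec a b c d e f) = 0 \<longleftrightarrow> a*b + c*d = normA2 e f"
proof -
  have "bfL (ivec a b c d e f) (ivec a b c d e f) = 2 * of_int (a*b + c*d - normA2 e f)"
    by (simp add: bfL_ivec normA2_def algebra_simps)
  then show ?thesis by (simp only: mult_eq_0_iff of_int_eq_0_iff) simp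
qed

lemma latL_add: "x \<in> latL \<Longrightarrow> y \<in> latL \<Longrightarrow> x + y \<in> latL"
  and latL_diff: "x \<in> latL \<Longrightarrow> y \<in> latL \<Longrightarrow> x - y \<in> latL"
  and latL_minus: "x \<in> latL \<Longrightarrow> - x \<in> latL"
  and latL_scaleR: "c \<in> \<int> \<Longrightarrow> x \<in> latL \<Longrightarrow> c *\<^sub>R x \<in> latL"
  by (auto simp: latL_def)

lemma bfL_latL_Ints: "x \<in> latL \<Longrightarrow> y \<in> latL \<Longrightarrow> bfL x y \<in> \<int>"
  by (auto simp: latL_iff_ivec bfL_ivec)

lemma bfL_dualL_Ints: "v \<in> dualL \<Longrightarrow> y \<in> latL \<Longrightarrow> bfL y v \<in> \<int>"
  using bfL_sym[of y v] by (simp add: dualL_def)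

definition qf :: "real^6 \<Rightarrow> real" where
  "qf u = bfL u u / 2"

lemma qf_ivec: "qf (ivec a b c d e f) = of_int (a*b + c*d - normA2 e f)"
  by (simp add: qf_def bfL_ivec normA2_def field_simps)

lemma qf_Ints: "u \<in> latL \<Longrightarrow> qf u \<in> \<int>"
  by (auto simp: latL_iff_ivec qf_ivec)

lemma bfL_reflL_self: "bfL w w \<noteq> 0 \<Longrightarrow> bfL (reflL w x) w = - bfL x w"
  by (simp add: reflL_def bfL_diff_left bfL_scaleR_left)

lemma reflL_reflL: "bfL w w \<noteq> 0 \<Longrightarrow> reflL w (reflL w x) = x"
  by (simp add: reflL_def[of w "reflL w x"] bfL_reflL_self) (simp add: reflL_def)

lemma bfL_reflL: "bfL w w \<noteq> 0 \<Longrightarrow> bfL (reflL w x) (reflL w y) = bfL x y"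
  by (simp add: reflL_def[of w y] bfL_diff_right bfL_scaleR_right bfL_reflL_self)
     (simp add: reflL_def bfL_diff_left bfL_scaleR_left bfL_sym[of y w])

lemma linear_reflL: "linear (reflL w)"
  by (rule linearI) (simp_all add: reflL_def bfL_add_left bfL_scaleR_left algebra_simps add_divide_distrib)

lemma foldr_reflL_rev_cancel:
  "\<forall>w\<in>set ws. bfL w w \<noteq> 0 \<Longrightarrow> foldr reflL (rev ws) (foldr reflL ws x) = x"
  by (induction ws arbitrary: x) (auto simp: reflL_reflL)

lemma foldr_reflL_cancel_rev:
  "\<forall>w\<in>set ws. bfL w w \<noteq> 0 \<Longrightarrow> foldr reflL ws (foldr reflL (rev ws) x) = x"
  using foldr_reflL_rev_cancel[of "rev ws" x] by simp

lemma bfL_foldr_reflL: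
  "\<forall>w\<in>set ws. bfL w w \<noteq> 0 \<Longrightarrow> bfL (foldr reflL ws x) (foldr reflL ws y) = bfL x y"
  by (induction ws) (auto simp: bfL_reflL)

lemma linear_foldr_reflL: "linear (foldr reflL ws)"
proof (induction ws)
  case Nil
  then show ?case using linear_id by (simp add: id_def)
next
  case (Cons w ws)
  then show ?case using linear_compose[OF Cons linear_reflL] by (simp add: comp_def)
qed

lemma int_matrix_latL: "int_matrix M \<Longrightarrow> y \<in> latL \<Longrightarrow> M *v y \<in> latL"
  unfolding latL_def int_matrix_def matrix_vector_mult_def
  by (auto intro!: Ints_sum Ints_mult)

lemma int_matrix_mult: "int_matrix A \<Longrightarrow> int_matrix B \<Longrightarrow> int_matrix (A ** B)"
  unfolding int_matrix_def matrix_matrix_mult_def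
  by (auto intro!: Ints_sum Ints_mult)

lemma int_matrix_matrix: "(\<forall>x\<in>latL. f x \<in> latL) \<Longrightarrow> int_matrix (matrix f)"
  by (auto simp: int_matrix_def matrix_def latL_def axis_def)

lemma OL_isometry: "g \<in> OL \<Longrightarrow> bfL (g *v x) (g *v y) = bfL x y"
  by (simp add: OL_def)

lemma OL_dualL:
  assumes g: "g \<in> OL" and v: "v \<in> dualL"
  shows "g *v v \<in> dualL"
proof -
  obtain h where h: "int_matrix h" "g ** h = mat 1"
    using g by (auto simp: OL_def)
  have "bfL (g *v v) y \<in> \<int>" if y: "y \<in> latL" for y
  proof -
    have "bfL (g *v v) y = bfL (g *v v) (g *v (h *v y))"
      by (simp add: matrix_vector_mul_assoc h(2))
    also have "\<dots> = bfL v (h *v y)" using OL_isometry[OF g] .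
    finally show ?thesis using v int_matrix_latL[OF h(1) y] by (simp add: dualL_def)
  qed
  then show ?thesis by (simp add: dualL_def)
qed

lemma OL_mult:
  assumes "g \<in> OL" "h \<in> OL"
  shows "g ** h \<in> OL"
proof -
  obtain g' where g': "int_matrix g" "int_matrix g'" "g ** g' = mat 1" "g' ** g = mat 1"
    using assms(1) by (auto simp: OL_def)
  obtain h' where h': "int_matrix h" "int_matrix h'" "h ** h' = mat 1" "h' ** h = mat 1"
    using assms(2) by (auto simp: OL_def)
  have "(g ** h) ** (h' ** g') = mat 1" "(h' ** g') ** (g ** h) = mat 1"
    by (metis g'(3,4) h'(3,4) matrix_mul_assoc matrix_mul_rid)+
  moreover have "bfL ((g ** h) *v x) ((g ** h) *v y) = bfL x y" for x y
    using OL_isometry assms by (simp add: matrix_vector_mul_assoc[symmetric])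
  ultimately show ?thesis
    unfolding OL_def using int_matrix_mult[OF g'(1) h'(1)] int_matrix_mult[OF h'(2) g'(2)] by blast
qed

lemma OL_inverse:
  assumes g: "g \<in> OL" and h: "int_matrix h" "g ** h = mat 1" "h ** g = mat 1"
  shows "h \<in> OL"
proof -
  have "bfL (h *v x) (h *v y) = bfL x y" for x y
    using OL_isometry[OF g, of "h *v x" "h *v y"] by (simp add: matrix_vector_mul_assoc h(2))
  then show ?thesis
    using g h unfolding OL_def by blast
qed

lemma spinor_norm_one_mult:
  assumes "spinor_norm_one g" "spinor_norm_one h"
  shows "spinor_norm_one (g ** h)"
proof -
  obtain ws1 where "\<forall>w\<in>set ws1. bfL w w \<noteq> 0" "\<forall>x. g *v x = foldr reflL ws1 x"
      "prod_list (map (\<lambda>w. - bfL w w / 2) ws1) > 0"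
    using assms(1) by (auto simp: spinor_norm_one_def)
  moreover obtain ws2 where "\<forall>w\<in>set ws2. bfL w w \<noteq> 0" "\<forall>x. h *v x = foldr reflL ws2 x"
      "prod_list (map (\<lambda>w. - bfL w w / 2) ws2) > 0"
    using assms(2) by (auto simp: spinor_norm_one_def)
  ultimately show ?thesis
    unfolding spinor_norm_one_def
    by (intro exI[of _ "ws1 @ ws2"]) (auto simp: matrix_vector_mul_assoc[symmetric])
qed

lemma spinor_norm_one_inverse:
  assumes g: "spinor_norm_one g" and gh: "g ** h = mat 1"
  shows "spinor_norm_one h"
proof -
  obtain ws where ws: "\<forall>w\<in>set ws. bfL w w \<noteq> 0" "\<forall>x. g *v x = foldr reflL ws x"
      "prod_list (map (\<lambda>w. - bfL w w / 2) ws) > 0"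
    using g by (auto simp: spinor_norm_one_def)
  have "h *v x = foldr reflL (rev ws) x" for x
  proof -
    have "foldr reflL ws (h *v x) = x"
      using ws(2)[rule_format, of "h *v x"] by (simp add: matrix_vector_mul_assoc gh)
    then show ?thesis using foldr_reflL_rev_cancel[OF ws(1), of "h *v x"] by simp
  qed
  moreover have "prod_list (map (\<lambda>w. - bfL w w / 2) (rev ws)) = prod_list (map (\<lambda>w. - bfL w w / 2) ws)"
    by (simp only: rev_map[symmetric] prod_list.rev)
  ultimately show ?thesis
    unfolding spinor_norm_one_def using ws(1,3) by (intro exI[of _ "rev ws"]) simp
qed

lemma OtildePlusL_OL: "g \<in> OtildePlusL \<Longrightarrow> g \<in> OL"
  by (simp add: OtildePlusL_def OtildeL_def)

lemma OtildePlusL_isometry: "g \<in> OtildePlusL \<Longrightarrow> bfL (g *v x) (g *v y) = bfL x y"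
  by (simp add: OtildePlusL_OL OL_isometry)

lemma OtildePlusL_latL: "g \<in> OtildePlusL \<Longrightarrow> x \<in> latL \<Longrightarrow> g *v x \<in> latL"
  by (auto simp: OtildePlusL_def OtildeL_def OL_def int_matrix_latL)

lemma OtildePlusL_mult:
  assumes g: "g \<in> OtildePlusL" and h: "h \<in> OtildePlusL"
  shows "g ** h \<in> OtildePlusL"
proof -
  have "(g ** h) *v v - v \<in> latL" if v: "v \<in> dualL" for v
  proof -
    have "g *v (h *v v) - h *v v \<in> latL"
      using g OL_dualL[OF OtildePlusL_OL[OF h] v] by (simp add: OtildePlusL_def OtildeL_def)
    moreover have "h *v v - v \<in> latL" using h v by (simp add: OtildePlusL_def OtildeL_def)
    ultimately show ?thesis
      using latL_add by (fastforce simp: matrix_vector_mul_assoc)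
  qed
  then show ?thesis
    using g h OL_mult spinor_norm_one_mult by (simp add: OtildePlusL_def OtildeL_def)
qed

lemma OtildePlusL_inverse:
  assumes g: "g \<in> OtildePlusL"
  shows "\<exists>h\<in>OtildePlusL. h ** g = mat 1"
proof -
  obtain h where h: "int_matrix h" "g ** h = mat 1" "h ** g = mat 1"
    using g by (auto simp: OtildePlusL_def OtildeL_def OL_def)
  have hO: "h \<in> OL" by (rule OL_inverse[OF OtildePlusL_OL[OF g] h])
  have "h *v v - v \<in> latL" if v: "v \<in> dualL" for v
  proof -
    have "g *v (h *v v) - h *v v \<in> latL"
      using g OL_dualL[OF hO v] by (simp add: OtildePlusL_def OtildeL_def)
    then show ?thesis
      using latL_minus by (fastforce simp: matrix_vector_mul_assoc h(2))
  qed
  moreover have "spinor_norm_one h"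
    using g h(2) spinor_norm_one_inverse by (auto simp: OtildePlusL_def)
  ultimately show ?thesis
    using hO h(3) by (auto simp: OtildePlusL_def OtildeL_def)
qed

lemma OtildePlusL_inj: "g \<in> OtildePlusL \<Longrightarrow> g *v x = 0 \<Longrightarrow> x = 0"
  by (metis OtildePlusL_inverse matrix_vector_mul_assoc matrix_vector_mul_lid matrix_vector_mult_0_right)

lemma mat_1_OtildePlusL: "mat 1 \<in> OtildePlusL"
proof -
  have "int_matrix (mat 1)" by (simp add: int_matrix_def mat_def)
  then have "mat 1 \<in> OL" by (auto simp: OL_def)
  moreover have "spinor_norm_one (mat 1)"
    unfolding spinor_norm_one_def by (intro exI[of _ "[]"]) simp
  ultimately show ?thesis
    by (simp add: OtildePlusL_def OtildeL_def latL_def)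
qed

lemma foldr_reflL_OtildePlusL:
  assumes aniso: "\<forall>w\<in>set ws. bfL w w \<noteq> 0"
    and pos: "prod_list (map (\<lambda>w. - bfL w w / 2) ws) > 0"
    and lat: "\<forall>x\<in>latL. foldr reflL ws x \<in> latL"
    and lat_inv: "\<forall>x\<in>latL. foldr reflL (rev ws) x \<in> latL"
    and disc: "\<forall>v\<in>dualL. foldr reflL ws v - v \<in> latL"
  shows "\<exists>g\<in>OtildePlusL. \<forall>x. g *v x = foldr reflL ws x"
proof -
  let ?f = "foldr reflL ws" and ?h = "foldr reflL (rev ws)"
  have vec: "matrix ?f *v x = ?f x" for x
    using matrix_vector_mul(2)[OF linear_foldr_reflL] by simp
  have "?f \<circ> ?h = id" "?h \<circ> ?f = id"
    using foldr_reflL_cancel_rev[OF aniso] foldr_reflL_rev_cancel[OF aniso] by (auto simp: fun_eq_iff)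
  then have "matrix ?f ** matrix ?h = mat 1" "matrix ?h ** matrix ?f = mat 1"
    by (metis matrix_compose[OF linear_foldr_reflL linear_foldr_reflL] matrix_id_mat_1)+
  then have "matrix ?f \<in> OL"
    using int_matrix_matrix[OF lat] int_matrix_matrix[OF lat_inv] vec bfL_foldr_reflL[OF aniso]
    unfolding OL_def by auto
  moreover have "spinor_norm_one (matrix ?f)"
    unfolding spinor_norm_one_def using aniso pos vec by auto
  ultimately show ?thesis
    using disc vec by (auto simp: OtildePlusL_def OtildeL_def)
qed

lemma root_reflection_OtildePlusL:
  assumes r: "r \<in> latL" and rr: "bfL r r = -2"
  shows "\<exists>g\<in>OtildePlusL. \<forall>x. g *v x = x + bfL x r *\<^sub>R r"
proof -
  have refl: "reflL r x = x + bfL x r *\<^sub>R r" for x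
    by (simp add: reflL_def rr)
  have "\<exists>g\<in>OtildePlusL. \<forall>x. g *v x = foldr reflL [r] x"
    by (rule foldr_reflL_OtildePlusL)
       (use r rr in \<open>auto simp: refl dualL_def latL_add latL_scaleR bfL_latL_Ints\<close>)
  then show ?thesis by (simp add: refl)
qed

definition eichler :: "real^6 \<Rightarrow> real^6 \<Rightarrow> real^6 \<Rightarrow> real^6" where
  "eichler e u x = x - bfL u x *\<^sub>R e + bfL e x *\<^sub>R u - (qf u * bfL e x) *\<^sub>R e"

lemma reflL_reflL_eq_eichler:
  assumes ee: "bfL e e = 0" and eu: "bfL e u = 0" and uu: "bfL u u \<noteq> 0"
  shows "reflL u (reflL (u + qf u *\<^sub>R e) x) = eichler e u x"
proof -
  define a b n where "a = bfL x u" and "b = bfL x e" and "n = bfL u u"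
  have q: "qf u = n / 2" by (simp add: qf_def n_def)
  have cc: "bfL (u + qf u *\<^sub>R e) (u + qf u *\<^sub>R e) = n"
    using ee eu by (simp add: bfL_linear bfL_sym[of u e] n_def)
  have xc: "bfL x (u + qf u *\<^sub>R e) = a + (n/2) * b"
    by (simp add: bfL_linear a_def b_def q)
  have y: "reflL (u + qf u *\<^sub>R e) x = x - (2*a/n + b) *\<^sub>R u - ((2*a/n + b) * (n/2)) *\<^sub>R e"
    unfolding reflL_def cc xc using uu q by (simp add: n_def algebra_simps add_divide_distrib)
  have yu: "bfL (x - (2*a/n + b) *\<^sub>R u - ((2*a/n + b) * (n/2)) *\<^sub>R e) u = - a - b * n"
    using eu uu by (simp add: bfL_linear a_def[symmetric] n_def[symmetric] field_simps)
  show ?thesis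
    unfolding y reflL_def[of u] yu n_def[symmetric] unfolding eichler_def q using uu
    by (simp add: vec_eq_iff bfL_sym[of u x] bfL_sym[of e x] a_def[symmetric] b_def[symmetric]
        n_def[symmetric] field_simps)
qed

lemma eichler_latL: "e \<in> latL \<Longrightarrow> u \<in> latL \<Longrightarrow> x \<in> latL \<Longrightarrow> eichler e u x \<in> latL"
  unfolding eichler_def
  by (intro latL_add latL_diff latL_scaleR Ints_mult bfL_latL_Ints qf_Ints; assumption)

lemma eichler_dualL: "e \<in> latL \<Longrightarrow> u \<in> latL \<Longrightarrow> v \<in> dualL \<Longrightarrow> eichler e u v - v \<in> latL"
proof -
  assume e: "e \<in> latL" and u: "u \<in> latL" and v: "v \<in> dualL"
  have "eichler e u v - v = bfL e v *\<^sub>R u - bfL u v *\<^sub>R e - (qf u * bfL e v) *\<^sub>R e"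
    by (simp add: eichler_def algebra_simps)
  then show ?thesis
    by (simp only:) (intro latL_add latL_diff latL_scaleR Ints_mult qf_Ints e u bfL_dualL_Ints[OF v])
qed

lemma eichler_add:
  assumes ee: "bfL e e = 0" and e1: "bfL e u1 = 0" and e2: "bfL e u2 = 0"
  shows "eichler e u1 (eichler e u2 x) = eichler e (u1 + u2) x"
proof -
  have q: "qf (u1 + u2) = qf u1 + qf u2 + bfL u1 u2"
    by (simp add: qf_def bfL_linear bfL_sym[of u2 u1] field_simps)
  have "bfL e (eichler e u2 x) = bfL e x"
    unfolding eichler_def using ee e2 by (simp add: bfL_linear)
  moreover have "bfL u1 (eichler e u2 x) = bfL u1 x + bfL e x * bfL u1 u2"
    unfolding eichler_def using e1 by (simp add: bfL_linear bfL_sym[of u1 e])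
  ultimately show ?thesis
    unfolding eichler_def[of e u1] unfolding eichler_def q bfL_add_left
    by (simp add: vec_eq_iff algebra_simps)
qed

lemma eichler_OtildePlusL_anisotropic:
  assumes e: "e \<in> latL" and u: "u \<in> latL" and ee: "bfL e e = 0" and eu: "bfL e u = 0"
    and q0: "qf u \<noteq> 0"
  shows "\<exists>g\<in>OtildePlusL. \<forall>x. g *v x = eichler e u x"
proof -
  let ?c = "u + qf u *\<^sub>R e"
  have uu: "bfL u u \<noteq> 0" using q0 by (simp add: qf_def)
  have cc: "bfL ?c ?c = bfL u u" using ee eu by (simp add: bfL_linear bfL_sym[of u e])
  have c: "?c \<in> latL" by (intro latL_add latL_scaleR qf_Ints u e)
  have word: "foldr reflL [u, ?c] x = eichler e u x" for x
    using reflL_reflL_eq_eichler[OF ee eu uu] by simp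
  have "qf ?c = qf u" using cc by (simp add: qf_def)
  then have shift: "?c + qf ?c *\<^sub>R (- e) = u" by simp
  have word_rev: "foldr reflL (rev [u, ?c]) x = eichler (- e) ?c x" for x
  proof -
    have "foldr reflL (rev [u, ?c]) x = reflL ?c (reflL (?c + qf ?c *\<^sub>R (- e)) x)"
      unfolding shift by simp
    also have "\<dots> = eichler (- e) ?c x"
      by (rule reflL_reflL_eq_eichler) (use ee eu cc uu in \<open>simp_all add: bfL_linear bfL_sym[of u e]\<close>)
    finally show ?thesis .
  qed
  have "\<exists>g\<in>OtildePlusL. \<forall>x. g *v x = foldr reflL [u, ?c] x"
  proof (rule foldr_reflL_OtildePlusL)
    show "prod_list (map (\<lambda>w. - bfL w w / 2) [u, ?c]) > 0"
      using cc uu by (auto simp: zero_less_mult_iff)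
  qed (use uu cc e u c word word_rev eichler_latL eichler_dualL latL_minus in auto)
  then show ?thesis by (simp only: word)
qed

lemma eichler_OtildePlusL:
  assumes e: "e \<in> latL" and u: "u \<in> latL" and ee: "bfL e e = 0" and eu: "bfL e u = 0"
    and r: "r \<in> latL" and rr: "bfL r r = -2" and er: "bfL e r = 0"
  shows "\<exists>g\<in>OtildePlusL. \<forall>x. g *v x = eichler e u x"
proof (cases "qf u = 0")
  case False
  then show ?thesis using eichler_OtildePlusL_anisotropic[OF e u ee eu] by blast
next
  case True
  define t :: real where "t = (if bfL u r = 1 then 2 else 1)"
  have t: "t \<in> \<int>" by (simp add: t_def)
  have "qf (u + t *\<^sub>R r) = t * bfL u r - t * t"
    using True rr by (simp add: qf_def bfL_linear bfL_sym[of r u] field_simps)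
  then have q1: "qf (u + t *\<^sub>R r) \<noteq> 0" by (simp add: t_def)
  have q2: "qf (- (t *\<^sub>R r)) \<noteq> 0" using rr by (simp add: qf_def bfL_linear t_def)
  have lat: "u + t *\<^sub>R r \<in> latL" "- (t *\<^sub>R r) \<in> latL"
    using u r t by (simp_all add: latL_add latL_minus latL_scaleR)
  have orth: "bfL e (u + t *\<^sub>R r) = 0" "bfL e (- (t *\<^sub>R r)) = 0"
    using eu er by (simp_all add: bfL_linear)
  obtain g1 where g1: "g1 \<in> OtildePlusL" "\<forall>x. g1 *v x = eichler e (u + t *\<^sub>R r) x"
    using eichler_OtildePlusL_anisotropic[OF e lat(1) ee orth(1) q1] by blast
  obtain g2 where g2: "g2 \<in> OtildePlusL" "\<forall>x. g2 *v x = eichler e (- (t *\<^sub>R r)) x"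
    using eichler_OtildePlusL_anisotropic[OF e lat(2) ee orth(2) q2] by blast
  have "(g1 ** g2) *v x = eichler e u x" for x
    using g1(2) g2(2) eichler_add[OF ee orth] by (simp add: matrix_vector_mul_assoc[symmetric])
  then show ?thesis using OtildePlusL_mult[OF g1(1) g2(1)] by blast
qed

lemma swap01_OtildePlusL: "\<exists>g\<in>OtildePlusL. \<forall>a b c d e f. g *v ivec a b c d e f = ivec b a c d e f"
proof -
  obtain g where g: "g \<in> OtildePlusL" "\<forall>x. g *v x = x + bfL x (ivec 1 (-1) 0 0 0 0) *\<^sub>R ivec 1 (-1) 0 0 0 0"
    using root_reflection_OtildePlusL[of "ivec 1 (-1) 0 0 0 0"] by (auto simp: bfL_ivec)
  have "g *v ivec a b c d e f = ivec b a c d e f" for a b c d e f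
    using g(2) by (simp add: bfL_ivec vec6_eq_iff)
  then show ?thesis using g(1) by blast
qed

lemma swap23_OtildePlusL: "\<exists>g\<in>OtildePlusL. \<forall>a b c d e f. g *v ivec a b c d e f = ivec a b d c e f"
proof -
  obtain g where g: "g \<in> OtildePlusL" "\<forall>x. g *v x = x + bfL x (ivec 0 0 1 (-1) 0 0) *\<^sub>R ivec 0 0 1 (-1) 0 0"
    using root_reflection_OtildePlusL[of "ivec 0 0 1 (-1) 0 0"] by (auto simp: bfL_ivec)
  have "g *v ivec a b c d e f = ivec a b d c e f" for a b c d e f
    using g(2) by (simp add: bfL_ivec vec6_eq_iff)
  then show ?thesis using g(1) by blast
qed

lemma eichler_OtildePlusL_A2_root:
  assumes "bfL e e = 0" "bfL e u = 0" "bfL e (ivec 0 0 0 0 1 0) = 0" "e \<in> latL" "u \<in> latL"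
  shows "\<exists>g\<in>OtildePlusL. \<forall>x. g *v x = eichler e u x"
  using eichler_OtildePlusL[of e u "ivec 0 0 0 0 1 0"] assms by (simp add: bfL_ivec)

lemma eichler_e0_OtildePlusL:
  "\<exists>g\<in>OtildePlusL. \<forall>a b c d e f. \<exists>a'.
     g *v ivec a b c d e f = ivec a' b (c + b*k2) (d + b*k3) (e + b*k4) (f + b*k5)"
proof -
  obtain g where g: "g \<in> OtildePlusL" "\<forall>x. g *v x = eichler (ivec 1 0 0 0 0 0) (ivec 0 0 k2 k3 k4 k5) x"
    using eichler_OtildePlusL_A2_root[of "ivec 1 0 0 0 0 0" "ivec 0 0 k2 k3 k4 k5"] by (auto simp: bfL_ivec)
  have "g *v ivec a b c d e f =
      ivec (a - (k2*d + k3*c - 2*k4*e + k4*f + k5*e - 2*k5*f) - (k2*k3 - normA2 k4 k5)*b) b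
        (c + b*k2) (d + b*k3) (e + b*k4) (f + b*k5)" for a b c d e f
    using g(2)[rule_format, of "ivec a b c d e f"]
    by (simp add: eichler_def qf_ivec bfL_ivec vec6_eq_iff algebra_simps)
  then show ?thesis using g(1) by blast
qed

lemma eichler_e2_OtildePlusL:
  "\<exists>g\<in>OtildePlusL. (\<forall>a b c. g *v ivec a b c 0 0 0 = ivec a b c 0 0 0) \<and>
     (\<forall>a b c d e f. \<exists>c'. g *v ivec a b c d e f = ivec a b c' d (e + d*k4) (f + d*k5))"
proof -
  obtain g where g: "g \<in> OtildePlusL" "\<forall>x. g *v x = eichler (ivec 0 0 1 0 0 0) (ivec 0 0 0 0 k4 k5) x"
    using eichler_OtildePlusL_A2_root[of "ivec 0 0 1 0 0 0" "ivec 0 0 0 0 k4 k5"] by (auto simp: bfL_ivec)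
  have action: "g *v ivec a b c d e f =
      ivec a b (c - (- 2*k4*e + k4*f + k5*e - 2*k5*f) + normA2 k4 k5 * d) d (e + d*k4) (f + d*k5)"
    for a b c d e f using g(2)[rule_format, of "ivec a b c d e f"]
    by (simp add: eichler_def qf_ivec bfL_ivec vec6_eq_iff algebra_simps)
  then have "g *v ivec a b c 0 0 0 = ivec a b c 0 0 0" for a b c
    by simp
  then show ?thesis using g(1) action by blast
qed

lemma shear02_OtildePlusL: "\<exists>g\<in>OtildePlusL. \<forall>a c. g *v ivec a 0 c 0 0 0 = ivec (a - k*c) 0 c 0 0 0"
proof -
  obtain g where g: "g \<in> OtildePlusL" "\<forall>x. g *v x = eichler (ivec 1 0 0 0 0 0) (ivec 0 0 0 k 0 0) x"
    using eichler_OtildePlusL_A2_root[of "ivec 1 0 0 0 0 0" "ivec 0 0 0 k 0 0"] by (auto simp: bfL_ivec)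
  have "g *v ivec a 0 c 0 0 0 = ivec (a - k*c) 0 c 0 0 0" for a c
    using g(2)[rule_format, of "ivec a 0 c 0 0 0"]
    by (simp add: eichler_def qf_ivec bfL_ivec vec6_eq_iff normA2_def algebra_simps)
  then show ?thesis using g(1) by blast
qed

lemma shear20_OtildePlusL: "\<exists>g\<in>OtildePlusL. \<forall>a c. g *v ivec a 0 c 0 0 0 = ivec a 0 (c + k*a) 0 0 0"
proof -
  obtain g where g: "g \<in> OtildePlusL" "\<forall>x. g *v x = eichler (ivec 0 1 0 0 0 0) (ivec 0 0 k 0 0 0) x"
    using eichler_OtildePlusL_A2_root[of "ivec 0 1 0 0 0 0" "ivec 0 0 k 0 0 0"] by (auto simp: bfL_ivec)
  have "g *v ivec a 0 c 0 0 0 = ivec a 0 (c + k*a) 0 0 0" for a c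
    using g(2)[rule_format, of "ivec a 0 c 0 0 0"]
    by (simp add: eichler_def qf_ivec bfL_ivec vec6_eq_iff normA2_def algebra_simps)
  then show ?thesis using g(1) by blast
qed

text \<open>(a, c) \<mapsto> (a + c, c) \<mapsto> (a + c, -a) \<mapsto> (c, -a)\<close>
lemma rotation02_OtildePlusL: "\<exists>g\<in>OtildePlusL. \<forall>a c. g *v ivec a 0 c 0 0 0 = ivec c 0 (- a) 0 0 0"
proof -
  obtain g1 where g1: "g1 \<in> OtildePlusL" "\<forall>a c. g1 *v ivec a 0 c 0 0 0 = ivec (a + c) 0 c 0 0 0"
    using shear02_OtildePlusL[of "-1"] by auto
  obtain g2 where g2: "g2 \<in> OtildePlusL" "\<forall>a c. g2 *v ivec a 0 c 0 0 0 = ivec a 0 (c - a) 0 0 0"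
    using shear20_OtildePlusL[of "-1"] by auto
  have "(g1 ** g2 ** g1) *v ivec a 0 c 0 0 0 = ivec c 0 (- a) 0 0 0" for a c
    using g1(2) g2(2) by (simp add: matrix_vector_mul_assoc[symmetric])
  then show ?thesis using OtildePlusL_mult g1(1) g2(1) by blast
qed

lemma normA2_double: "2 * normA2 a b = (a - b)^2 + a^2 + b^2"
  by (simp add: normA2_def power2_eq_square algebra_simps)

lemma normA2_nonneg: "0 \<le> normA2 a b"
  using normA2_double[of a b] by (smt (verit) zero_le_power2)

lemma normA2_eq_0_iff: "normA2 a b = 0 \<longleftrightarrow> a = 0 \<and> b = 0"
  using normA2_double[of a b] by (smt (verit) zero_le_power2 zero_eq_power2 normA2_def)

lemma normA2_minus: "normA2 (- a) (- b) = normA2 a b"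
  by (simp add: normA2_def)

lemma nonneg_residue_bounds:
  fixes a b m :: int
  assumes "0 \<le> a" "0 \<le> b" "a < m" "b < m"
  shows "0 \<le> a*b \<and> a*b < m*m \<and> normA2 a b < m*m"
proof -
  have "a*a < m*m" "b*b < m*m" "a*b < m*m"
    using assms by (simp_all add: mult_strict_mono)
  moreover have "b*b \<le> a*b \<or> a*a \<le> a*b"
    using assms by (metis linorder_le_cases mult_left_mono mult_right_mono)
  ultimately show ?thesis using assms by (auto simp: normA2_def)
qed

lemma mod_residue_bounds:
  fixes n y z :: int
  assumes "n \<noteq> 0"
  shows "0 \<le> (y mod n)*(z mod n) \<and> (y mod n)*(z mod n) < n*n \<and> normA2 (y mod n) (z mod n) < n*n"
proof (cases "n > 0")
  case True
  then show ?thesis using nonneg_residue_bounds[of "y mod n" "z mod n" n] by simp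
next
  case False
  then have "n < 0" using assms by simp
  then show ?thesis
    using nonneg_residue_bounds[of "- (y mod n)" "- (z mod n)" "- n"] neg_mod_sign neg_mod_bound
    by (simp add: normA2_minus)
qed

lemma abs_less_if_mult_eq:
  fixes c n p :: int
  assumes "c * n = p" "\<bar>p\<bar> < n*n"
  shows "\<bar>c\<bar> < \<bar>n\<bar>"
proof -
  have "\<bar>c\<bar> * \<bar>n\<bar> < \<bar>n\<bar> * \<bar>n\<bar>"
    using assms by (simp add: abs_mult[symmetric] abs_mult_self_eq)
  then show ?thesis by (rule mult_right_less_imp_less) simp
qed

lemma add_mult_neg_div: "x + n * (- (x div n)) = x mod n" for x n :: int
  by (simp add: minus_mult_div_eq_mod[symmetric])

lemma isotropic_ivec_reduce_coord1:
  assumes "bfL (ivec x0 x1 x2 x3 x4 x5) (ivec x0 x1 x2 x3 x4 x5) = 0"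
  shows "\<exists>g\<in>OtildePlusL. \<exists>y0 y2 y3 y4 y5. g *v ivec x0 x1 x2 x3 x4 x5 = ivec y0 0 y2 y3 y4 y5"
  using assms
proof (induction "nat \<bar>x1\<bar>" arbitrary: x0 x1 x2 x3 x4 x5 rule: less_induct)
  case less
  show ?case
  proof (cases "x1 = 0")
    case True
    then show ?thesis using mat_1_OtildePlusL by force
  next
    case False
    define r2 r3 r4 r5 where "r2 = x2 mod x1" and "r3 = x3 mod x1" and "r4 = x4 mod x1"
      and "r5 = x5 mod x1"
    obtain g1 where g1: "g1 \<in> OtildePlusL" "\<And>a b c d e f. \<exists>a'. g1 *v ivec a b c d e f =
        ivec a' b (c + b * - (x2 div x1)) (d + b * - (x3 div x1)) (e + b * - (x4 div x1)) (f + b * - (x5 div x1))"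
      using eichler_e0_OtildePlusL by blast
    obtain A where A: "g1 *v ivec x0 x1 x2 x3 x4 x5 = ivec A x1 r2 r3 r4 r5"
      using g1(2)[of x0 x1 x2 x3 x4 x5] unfolding r2_def r3_def r4_def r5_def add_mult_neg_div by blast
    have iso: "A * x1 + r2 * r3 = normA2 r4 r5"
      using OtildePlusL_isometry[OF g1(1)] less.prems by (metis A isotropic_ivec_iff)
    have "\<bar>normA2 r4 r5 - r2 * r3\<bar> < x1 * x1"
      using mod_residue_bounds[OF False, of x2 x3] mod_residue_bounds[OF False, of x4 x5] normA2_nonneg
      unfolding r2_def r3_def r4_def r5_def by (smt (verit))
    then have "\<bar>A\<bar> < \<bar>x1\<bar>" using iso by (intro abs_less_if_mult_eq[of A x1]) (auto simp: algebra_simps)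
    obtain g2 where g2: "g2 \<in> OtildePlusL" "g2 *v ivec A x1 r2 r3 r4 r5 = ivec x1 A r2 r3 r4 r5"
      using swap01_OtildePlusL by blast
    have "bfL (ivec x1 A r2 r3 r4 r5) (ivec x1 A r2 r3 r4 r5) = 0"
      using iso by (simp add: isotropic_ivec_iff mult.commute)
    then obtain g3 y0 y2 y3 y4 y5 where g3: "g3 \<in> OtildePlusL"
        "g3 *v ivec x1 A r2 r3 r4 r5 = ivec y0 0 y2 y3 y4 y5"
      using less.hyps \<open>\<bar>A\<bar> < \<bar>x1\<bar>\<close> by (metis nat_less_eq_zless abs_ge_zero)
    have "(g3 ** g2 ** g1) *v ivec x0 x1 x2 x3 x4 x5 = ivec y0 0 y2 y3 y4 y5"
      using A g2(2) g3(2) by (simp add: matrix_vector_mul_assoc[symmetric])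
    then show ?thesis using g1(1) g2(1) g3(1) OtildePlusL_mult by blast
  qed
qed

lemma isotropic_ivec_reduce_coord345:
  assumes "bfL (ivec x0 0 x2 x3 x4 x5) (ivec x0 0 x2 x3 x4 x5) = 0"
  shows "\<exists>g\<in>OtildePlusL. (\<forall>n. g *v ivec n 0 0 0 0 0 = ivec n 0 0 0 0 0)
    \<and> (\<exists>y2. g *v ivec x0 0 x2 x3 x4 x5 = ivec x0 0 y2 0 0 0)"
  using assms
proof (induction "nat \<bar>x3\<bar>" arbitrary: x2 x3 x4 x5 rule: less_induct)
  case less
  show ?case
  proof (cases "x3 = 0")
    case True
    then have "x4 = 0 \<and> x5 = 0"
      using less.prems by (simp add: isotropic_ivec_iff normA2_eq_0_iff)
    then show ?thesis using True mat_1_OtildePlusL by force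
  next
    case False
    define r4 r5 where "r4 = x4 mod x3" and "r5 = x5 mod x3"
    obtain g1 where g1: "g1 \<in> OtildePlusL" "\<And>a b c. g1 *v ivec a b c 0 0 0 = ivec a b c 0 0 0"
      "\<And>a b c d e f. \<exists>c'. g1 *v ivec a b c d e f = ivec a b c' d (e + d * - (x4 div x3)) (f + d * - (x5 div x3))"
      using eichler_e2_OtildePlusL by blast
    obtain C where C: "g1 *v ivec x0 0 x2 x3 x4 x5 = ivec x0 0 C x3 r4 r5"
      using g1(3)[of x0 0 x2 x3 x4 x5] unfolding r4_def r5_def add_mult_neg_div by blast
    have iso: "C * x3 = normA2 r4 r5"
      using OtildePlusL_isometry[OF g1(1)] less.prems by (metis C isotropic_ivec_iff add_0 mult_zero_right)
    then have "\<bar>C\<bar> < \<bar>x3\<bar>"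
      using mod_residue_bounds[OF False, of x4 x5] normA2_nonneg unfolding r4_def r5_def
      by (intro abs_less_if_mult_eq[of C x3]) auto
    obtain g2 where g2: "g2 \<in> OtildePlusL" "\<And>a b c d e f. g2 *v ivec a b c d e f = ivec a b d c e f"
      using swap23_OtildePlusL by blast
    have "bfL (ivec x0 0 x3 C r4 r5) (ivec x0 0 x3 C r4 r5) = 0"
      using iso by (simp add: isotropic_ivec_iff mult.commute)
    then obtain g3 y2 where g3: "g3 \<in> OtildePlusL" "\<And>n. g3 *v ivec n 0 0 0 0 0 = ivec n 0 0 0 0 0"
        "g3 *v ivec x0 0 x3 C r4 r5 = ivec x0 0 y2 0 0 0"
      using less.hyps \<open>\<bar>C\<bar> < \<bar>x3\<bar>\<close> by (metis nat_less_eq_zless abs_ge_zero)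
    have "(g3 ** g2 ** g1) *v ivec n 0 0 0 0 0 = ivec n 0 0 0 0 0" for n
      using g1(2) g2(2) g3(2) by (simp add: matrix_vector_mul_assoc[symmetric])
    moreover have "(g3 ** g2 ** g1) *v ivec x0 0 x2 x3 x4 x5 = ivec x0 0 y2 0 0 0"
      using C g2(2) g3(3) by (simp add: matrix_vector_mul_assoc[symmetric])
    ultimately show ?thesis using g1(1) g2(1) g3(1) OtildePlusL_mult by blast
  qed
qed

lemma ivec_coord02_to_e0:
  "\<exists>g\<in>OtildePlusL. \<exists>n. g *v ivec a 0 c 0 0 0 = ivec n 0 0 0 0 0"
proof (induction "nat \<bar>c\<bar>" arbitrary: a c rule: less_induct)
  case less
  show ?case
  proof (cases "c = 0")
    case True
    then show ?thesis using mat_1_OtildePlusL by force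
  next
    case False
    obtain g1 where g1: "g1 \<in> OtildePlusL" "g1 *v ivec a 0 c 0 0 0 = ivec (a mod c) 0 c 0 0 0"
      using shear02_OtildePlusL[of "a div c"] by (metis minus_div_mult_eq_mod mult.commute)
    obtain g2 where g2: "g2 \<in> OtildePlusL" "g2 *v ivec (a mod c) 0 c 0 0 0 = ivec c 0 (- (a mod c)) 0 0 0"
      using rotation02_OtildePlusL by blast
    obtain g3 n where g3: "g3 \<in> OtildePlusL" "g3 *v ivec c 0 (- (a mod c)) 0 0 0 = ivec n 0 0 0 0 0"
      using less abs_mod_less[OF False, of a] by (metis abs_minus_cancel nat_less_eq_zless abs_ge_zero)
    have "(g3 ** g2 ** g1) *v ivec a 0 c 0 0 0 = ivec n 0 0 0 0 0"
      using g1(2) g2(2) g3(2) by (simp add: matrix_vector_mul_assoc[symmetric])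
    then show ?thesis using g1(1) g2(1) g3(1) OtildePlusL_mult by blast
  qed
qed

lemma isotropic_latL_to_e0:
  assumes x: "x \<in> latL" and iso: "bfL x x = 0"
  shows "\<exists>g\<in>OtildePlusL. \<exists>n. g *v x = ivec n 0 0 0 0 0"
proof -
  obtain x0 x1 x2 x3 x4 x5 where x_eq: "x = ivec x0 x1 x2 x3 x4 x5"
    using x latL_iff_ivec by blast
  obtain g1 y0 y2 y3 y4 y5 where g1: "g1 \<in> OtildePlusL" "g1 *v x = ivec y0 0 y2 y3 y4 y5"
    using isotropic_ivec_reduce_coord1 iso unfolding x_eq by blast
  have "bfL (ivec y0 0 y2 y3 y4 y5) (ivec y0 0 y2 y3 y4 y5) = 0"
    using OtildePlusL_isometry[OF g1(1)] iso by (metis g1(2))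
  then obtain g2 z2 where g2: "g2 \<in> OtildePlusL" "g2 *v ivec y0 0 y2 y3 y4 y5 = ivec y0 0 z2 0 0 0"
    using isotropic_ivec_reduce_coord345 by blast
  obtain g3 n where g3: "g3 \<in> OtildePlusL" "g3 *v ivec y0 0 z2 0 0 0 = ivec n 0 0 0 0 0"
    using ivec_coord02_to_e0 by blast
  have "(g3 ** g2 ** g1) *v x = ivec n 0 0 0 0 0"
    using g1(2) g2(2) g3(2) by (simp add: matrix_vector_mul_assoc[symmetric])
  then show ?thesis using g1(1) g2(1) g3(1) OtildePlusL_mult by blast
qed

lemma isotropic_pair_to_e0_e2:
  assumes x: "x \<in> latL" and y: "y \<in> latL" and x0: "x \<noteq> 0"
    and xx: "bfL x x = 0" and xy: "bfL x y = 0" and yy: "bfL y y = 0"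
  shows "\<exists>g\<in>OtildePlusL. \<exists>n m d. n \<noteq> 0 \<and> g *v x = ivec n 0 0 0 0 0 \<and> g *v y = ivec m 0 d 0 0 0"
proof -
  obtain g1 n where g1: "g1 \<in> OtildePlusL" "g1 *v x = ivec n 0 0 0 0 0"
    using isotropic_latL_to_e0[OF x xx] by blast
  have n: "n \<noteq> 0"
    using OtildePlusL_inj[OF g1(1)] x0 g1(2) by (auto simp: ivec_eq_0_iff)
  obtain w0 w1 w2 w3 w4 w5 where w: "g1 *v y = ivec w0 w1 w2 w3 w4 w5"
    using OtildePlusL_latL[OF g1(1) y] latL_iff_ivec by blast
  have "bfL (ivec n 0 0 0 0 0) (ivec w0 w1 w2 w3 w4 w5) = 0"
    using OtildePlusL_isometry[OF g1(1)] xy g1(2) w by metis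
  then have w1: "w1 = 0" using n by (simp add: bfL_ivec)
  have "bfL (ivec w0 0 w2 w3 w4 w5) (ivec w0 0 w2 w3 w4 w5) = 0"
    using OtildePlusL_isometry[OF g1(1)] yy w w1 by metis
  then obtain g2 d where g2: "g2 \<in> OtildePlusL" "\<And>k. g2 *v ivec k 0 0 0 0 0 = ivec k 0 0 0 0 0"
      "g2 *v ivec w0 0 w2 w3 w4 w5 = ivec w0 0 d 0 0 0"
    using isotropic_ivec_reduce_coord345 by blast
  have "(g2 ** g1) *v x = ivec n 0 0 0 0 0" "(g2 ** g1) *v y = ivec w0 0 d 0 0 0"
    using g1(2) g2(2,3) w w1 by (simp_all add: matrix_vector_mul_assoc[symmetric])
  then show ?thesis using n g1(1) g2(1) OtildePlusL_mult by blast
qed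

lemma ratL_scale_latL:
  assumes "x \<in> ratL"
  shows "\<exists>n::int. n \<noteq> 0 \<and> of_int n *\<^sub>R x \<in> latL"
proof -
  have "\<exists>d::int. d > 0 \<and> of_int d * x$i \<in> \<int>" for i
  proof -
    obtain a b :: int where "b > 0" "x$i = of_int a / of_int b"
      using assms Rats_cases' by (metis ratL_def mem_Collect_eq)
    then show ?thesis by (intro exI[of _ b]) simp
  qed
  then obtain D where D: "\<And>i. D i > 0" "\<And>i. of_int (D i) * x$i \<in> \<int>" by metis
  define n where "n = (\<Prod>i\<in>UNIV. D i)"
  have "(of_int n *\<^sub>R x) $ i \<in> \<int>" for i
  proof -
    have "n = (\<Prod>j\<in>UNIV - {i}. D j) * D i"
      unfolding n_def by (subst prod.remove[of _ i]) simp_all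
    then show ?thesis using D(2)[of i] by (simp add: mult.assoc del: of_int_prod)
  qed
  moreover have "n \<noteq> 0" unfolding n_def using D(1) by (simp add: prod_pos less_imp_neq[symmetric])
  ultimately show ?thesis by (auto simp: latL_def)
qed

abbreviation rat_line :: "real^6 \<Rightarrow> (real^6) set" where
  "rat_line v \<equiv> {c *\<^sub>R v | c. c \<in> \<rat>}"

abbreviation rat_plane :: "real^6 \<Rightarrow> real^6 \<Rightarrow> (real^6) set" where
  "rat_plane v w \<equiv> {a *\<^sub>R v + b *\<^sub>R w | a b. a \<in> \<rat> \<and> b \<in> \<rat>}"

lemma act_rat_line: "act g (rat_line v) = rat_line (g *v v)"
proof -
  have "rat_line u = (\<lambda>c. c *\<^sub>R u) ` \<rat>" for u by blast
  then show ?thesis by (simp add: act_def image_image matrix_vector_mult_scaleR)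
qed

lemma act_rat_plane: "act g (rat_plane v w) = rat_plane (g *v v) (g *v w)"
proof -
  have "rat_plane u u' = (\<lambda>(a, b). a *\<^sub>R u + b *\<^sub>R u') ` (\<rat> \<times> \<rat>)" for u u' by auto
  then show ?thesis
    by (simp add: act_def image_image case_prod_beta matrix_vector_mult_scaleR matrix_vector_right_distrib)
qed

lemma act_mult: "act g (act h S) = act (g ** h) S"
  by (simp add: act_def image_comp comp_def matrix_vector_mul_assoc)

lemma act_mat_1: "act (mat 1) S = S"
  by (simp add: act_def)

lemma rat_line_scaleR:
  assumes "r \<in> \<rat>" "r \<noteq> 0"
  shows "rat_line (r *\<^sub>R v) = rat_line v"
proof (intro set_eqI iffI)
  fix z assume "z \<in> rat_line v"
  then obtain c where "c \<in> \<rat>" "z = c *\<^sub>R v" by blast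
  then show "z \<in> rat_line (r *\<^sub>R v)"
    using assms by (intro CollectI exI[of _ "c / r"]) simp
qed (use assms in auto)

lemma rat_plane_triangular:
  assumes "\<alpha> \<in> \<rat>" "\<beta> \<in> \<rat>" "\<delta> \<in> \<rat>" "\<alpha> \<noteq> 0" "\<delta> \<noteq> 0"
  shows "rat_plane (\<alpha> *\<^sub>R v) (\<beta> *\<^sub>R v + \<delta> *\<^sub>R w) = rat_plane v w"
proof (intro set_eqI iffI)
  fix z assume "z \<in> rat_plane (\<alpha> *\<^sub>R v) (\<beta> *\<^sub>R v + \<delta> *\<^sub>R w)"
  then obtain a b where ab: "a \<in> \<rat>" "b \<in> \<rat>" "z = a *\<^sub>R (\<alpha> *\<^sub>R v) + b *\<^sub>R (\<beta> *\<^sub>R v + \<delta> *\<^sub>R w)"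
    by blast
  then have "z = (a * \<alpha> + b * \<beta>) *\<^sub>R v + (b * \<delta>) *\<^sub>R w" by (simp add: algebra_simps)
  moreover have "a * \<alpha> + b * \<beta> \<in> \<rat>" "b * \<delta> \<in> \<rat>" using ab assms by simp_all
  ultimately show "z \<in> rat_plane v w" by blast
next
  fix z assume "z \<in> rat_plane v w"
  then obtain a b where ab: "a \<in> \<rat>" "b \<in> \<rat>" "z = a *\<^sub>R v + b *\<^sub>R w" by blast
  then have "z = ((a - b / \<delta> * \<beta>) / \<alpha>) *\<^sub>R (\<alpha> *\<^sub>R v) + (b / \<delta>) *\<^sub>R (\<beta> *\<^sub>R v + \<delta> *\<^sub>R w)"
    using assms by (simp add: vec_eq_iff field_simps)
  moreover have "(a - b / \<delta> * \<beta>) / \<alpha> \<in> \<rat>" "b / \<delta> \<in> \<rat>" using ab assms by simp_all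
  ultimately show "z \<in> rat_plane (\<alpha> *\<^sub>R v) (\<beta> *\<^sub>R v + \<delta> *\<^sub>R w)" by blast
qed

lemma iso_line_to_standard:
  assumes "iso_line l"
  shows "\<exists>g\<in>OtildePlusL. act g l = rat_line (ivec 1 0 0 0 0 0)"
proof -
  obtain v where v: "v \<in> ratL" "v \<noteq> 0" "bfL v v = 0" "l = rat_line v"
    using assms by (auto simp: iso_line_def)
  obtain k where k: "k \<noteq> 0" "of_int k *\<^sub>R v \<in> latL"
    using ratL_scale_latL[OF v(1)] by blast
  have "bfL (of_int k *\<^sub>R v) (of_int k *\<^sub>R v) = 0" using v(3) by (simp add: bfL_linear)
  then obtain g n where g: "g \<in> OtildePlusL" "g *v (of_int k *\<^sub>R v) = ivec n 0 0 0 0 0"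
    using isotropic_latL_to_e0[OF k(2)] by blast
  have "of_int k *\<^sub>R v \<noteq> 0" using k(1) v(2) by simp
  then have "g *v (of_int k *\<^sub>R v) \<noteq> 0" using OtildePlusL_inj[OF g(1)] by blast
  then have "n \<noteq> 0" using g(2) by auto
  have "of_int k *\<^sub>R (g *v v) = of_int n *\<^sub>R ivec 1 0 0 0 0 0"
    using g(2) by (simp add: matrix_vector_mult_scaleR ivec_e0_eq_scaleR[of n])
  then have "g *v v = (of_int n / of_int k) *\<^sub>R ivec 1 0 0 0 0 0"
    using k(1) by (simp add: eq_vector_fraction_iff)
  then have "act g l = rat_line ((of_int n / of_int k) *\<^sub>R ivec 1 0 0 0 0 0)"
    by (simp add: v(4) act_rat_line)
  also have "\<dots> = rat_line (ivec 1 0 0 0 0 0)"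
    using \<open>n \<noteq> 0\<close> k(1) by (intro rat_line_scaleR) simp_all
  finally show ?thesis using g(1) by blast
qed

lemma tot_iso_plane_to_standard:
  assumes "tot_iso_plane P"
  shows "\<exists>g\<in>OtildePlusL. act g P = rat_plane (ivec 1 0 0 0 0 0) (ivec 0 0 1 0 0 0)"
proof -
  obtain v w where v: "v \<in> ratL" "w \<in> ratL"
    and indep: "\<forall>a\<in>\<rat>. \<forall>b\<in>\<rat>. a *\<^sub>R v + b *\<^sub>R w = 0 \<longrightarrow> a = 0 \<and> b = 0"
    and iso: "bfL v v = 0" "bfL v w = 0" "bfL w w = 0"
    and P: "P = rat_plane v w"
    using assms unfolding tot_iso_plane_def by blast
  obtain k where k: "k \<noteq> 0" "of_int k *\<^sub>R v \<in> latL" using ratL_scale_latL[OF v(1)] by blast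
  obtain k' where k': "k' \<noteq> 0" "of_int k' *\<^sub>R w \<in> latL" using ratL_scale_latL[OF v(2)] by blast
  have "v \<noteq> 0" using indep by (metis Rats_0 Rats_1 add_0 scaleR_one scaleR_zero_left zero_neq_one)
  then have "of_int k *\<^sub>R v \<noteq> 0" using k(1) by simp
  then obtain g n m d where g: "g \<in> OtildePlusL" "n \<noteq> 0"
      "g *v (of_int k *\<^sub>R v) = ivec n 0 0 0 0 0" "g *v (of_int k' *\<^sub>R w) = ivec m 0 d 0 0 0"
    using isotropic_pair_to_e0_e2[OF k(2) k'(2)] iso by (simp add: bfL_linear) blast
  have gv: "g *v v = (of_int n / of_int k) *\<^sub>R ivec 1 0 0 0 0 0"
    using g(3) k(1) by (simp add: matrix_vector_mult_scaleR ivec_e0_eq_scaleR[of n] eq_vector_fraction_iff)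
  have "ivec m 0 d 0 0 0 = of_int m *\<^sub>R ivec 1 0 0 0 0 0 + of_int d *\<^sub>R ivec 0 0 1 0 0 0"
    by (simp add: vec6_eq_iff)
  then have "g *v w = (1 / of_int k') *\<^sub>R (of_int m *\<^sub>R ivec 1 0 0 0 0 0 + of_int d *\<^sub>R ivec 0 0 1 0 0 0)"
    using g(4) k'(1) by (simp add: matrix_vector_mult_scaleR eq_vector_fraction_iff)
  then have gw: "g *v w = (of_int m / of_int k') *\<^sub>R ivec 1 0 0 0 0 0 + (of_int d / of_int k') *\<^sub>R ivec 0 0 1 0 0 0"
    by (simp add: scaleR_add_right)
  have "d \<noteq> 0"
  proof
    assume "d = 0"
    let ?a = "- (of_int m / of_int k')" and ?b = "of_int n / of_int k :: real"
    have "g *v (?a *\<^sub>R v + ?b *\<^sub>R w) = 0"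
      using gv gw \<open>d = 0\<close> by (simp add: matrix_vector_mult_scaleR matrix_vector_right_distrib
          matrix_vector_mult_diff_distrib mult.commute)
    then have "?a *\<^sub>R v + ?b *\<^sub>R w = 0" using OtildePlusL_inj[OF g(1)] by blast
    moreover have "?a \<in> \<rat>" "?b \<in> \<rat>" by simp_all
    ultimately have "?b = 0" using indep by blast
    then show False using g(2) k(1) by simp
  qed
  have "act g P = rat_plane (g *v v) (g *v w)" by (simp add: P act_rat_plane)
  also have "\<dots> = rat_plane (ivec 1 0 0 0 0 0) (ivec 0 0 1 0 0 0)"
    unfolding gv gw using g(2) k(1) k'(1) \<open>d \<noteq> 0\<close> by (intro rat_plane_triangular) simp_all
  finally show ?thesis using g(1) by blast
qed

lemma OtildePlusL_act_common_image:
  assumes "g1 \<in> OtildePlusL" "act g1 S1 = T" "g2 \<in> OtildePlusL" "act g2 S2 = T"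
  shows "\<exists>g\<in>OtildePlusL. act g S1 = S2"
proof -
  obtain h where h: "h \<in> OtildePlusL" "h ** g2 = mat 1"
    using OtildePlusL_inverse[OF assms(3)] by blast
  have "act (h ** g1) S1 = act (h ** g2) S2"
    using assms(2,4) by (simp add: act_mult[symmetric])
  then have "act (h ** g1) S1 = S2"
    using h(2) by (simp add: act_mat_1)
  then show ?thesis using OtildePlusL_mult[OF h(1) assms(1)] by blast
qed

lemma iso_lines_transitive:
  "\<forall>l1 l2. iso_line l1 \<and> iso_line l2 \<longrightarrow> (\<exists>g\<in>OtildePlusL. act g l1 = l2)"
proof (intro allI impI)
  fix l1 l2 assume "iso_line l1 \<and> iso_line l2"
  then obtain g1 g2 where "g1 \<in> OtildePlusL" "act g1 l1 = rat_line (ivec 1 0 0 0 0 0)"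
      and "g2 \<in> OtildePlusL" "act g2 l2 = rat_line (ivec 1 0 0 0 0 0)"
    using iso_line_to_standard by meson
  then show "\<exists>g\<in>OtildePlusL. act g l1 = l2" by (rule OtildePlusL_act_common_image)
qed

lemma tot_iso_planes_transitive:
  "\<forall>P1 P2. tot_iso_plane P1 \<and> tot_iso_plane P2 \<longrightarrow> (\<exists>g\<in>OtildePlusL. act g P1 = P2)"
proof (intro allI impI)
  fix P1 P2 assume "tot_iso_plane P1 \<and> tot_iso_plane P2"
  then obtain g1 g2 where "g1 \<in> OtildePlusL" "act g1 P1 = rat_plane (ivec 1 0 0 0 0 0) (ivec 0 0 1 0 0 0)"
      and "g2 \<in> OtildePlusL" "act g2 P2 = rat_plane (ivec 1 0 0 0 0 0) (ivec 0 0 1 0 0 0)"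
    using tot_iso_plane_to_standard by meson
  then show "\<exists>g\<in>OtildePlusL. act g P1 = P2" by (rule OtildePlusL_act_common_image)
qed

lemma orbitG_eq_if_transitive:
  assumes mult: "\<And>g h. g \<in> G \<Longrightarrow> h \<in> G \<Longrightarrow> g ** h \<in> G"
    and trans: "\<forall>a b. X a \<and> X b \<longrightarrow> (\<exists>g\<in>G. act g a = b)" and "X a" "X b"
  shows "orbitG G a = orbitG G b"
proof -
  have "orbitG G a \<subseteq> orbitG G b" if ab: "X a" "X b" for a b
  proof
    fix z assume "z \<in> orbitG G a"
    then obtain g where g: "g \<in> G" "z = act g a" by (auto simp: orbitG_def)
    obtain h where h: "h \<in> G" "act h b = a" using trans ab by blast
    have "z = act (g ** h) b" using g(2) h(2) by (simp add: act_mult[symmetric])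
    then show "z \<in> orbitG G b" using mult[OF g(1) h(1)] by (auto simp: orbitG_def)
  qed
  then show ?thesis using assms(3,4) by blast
qed

lemma orbitG_image_singleton:
  assumes "\<And>g h. g \<in> G \<Longrightarrow> h \<in> G \<Longrightarrow> g ** h \<in> G"
    and "\<forall>a b. X a \<and> X b \<longrightarrow> (\<exists>g\<in>G. act g a = b)" and "X a0"
  shows "orbitG G ` {a. X a} = {orbitG G a0}"
  using orbitG_eq_if_transitive[OF assms(1,2)] assms(3) by blast

lemma building_edges_singleton:
  assumes mult: "\<And>g h. g \<in> G \<Longrightarrow> h \<in> G \<Longrightarrow> g ** h \<in> G"
    and lines: "\<forall>l1 l2. iso_line l1 \<and> iso_line l2 \<longrightarrow> (\<exists>g\<in>G. act g l1 = l2)"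
    and planes: "\<forall>P1 P2. tot_iso_plane P1 \<and> tot_iso_plane P2 \<longrightarrow> (\<exists>g\<in>G. act g P1 = P2)"
    and l0: "iso_line l0" and P0: "tot_iso_plane P0" and "g0 \<in> G" "act g0 l0 \<subseteq> P0"
  shows "building_edges G = {(orbitG G l0, orbitG G P0)}"
  using orbitG_eq_if_transitive[OF mult lines _ l0] orbitG_eq_if_transitive[OF mult planes _ P0]
    assms(6,7) l0 P0
  unfolding building_edges_def by blast

lemma iso_line_standard: "iso_line (rat_line (ivec 1 0 0 0 0 0))"
  unfolding iso_line_def by (rule bexI[of _ "ivec 1 0 0 0 0 0"]) (auto simp: bfL_ivec ratL_def all_6 ivec_eq_0_iff)

lemma tot_iso_plane_standard: "tot_iso_plane (rat_plane (ivec 1 0 0 0 0 0) (ivec 0 0 1 0 0 0))"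
  unfolding tot_iso_plane_def
  by (rule bexI[of _ "ivec 1 0 0 0 0 0"], rule bexI[of _ "ivec 0 0 1 0 0 0"])
     (auto simp: bfL_ivec ratL_def all_6 vec6_eq_iff)

lemma rat_line_subset_rat_plane: "rat_line v \<subseteq> rat_plane v w"
  by (force intro: Rats_0)

theorem mainTheorem9:
  shows "(\<forall>l1 l2. iso_line l1 \<and> iso_line l2 \<longrightarrow> (\<exists>g\<in>OtildePlusL. act g l1 = l2))
       \<and> (\<forall>P1 P2. tot_iso_plane P1 \<and> tot_iso_plane P2 \<longrightarrow> (\<exists>g\<in>OtildePlusL. act g P1 = P2))
       \<and> (\<exists>NL NP. line_nodes OtildePlusL = {NL} \<and> plane_nodes OtildePlusL = {NP}
                 \<and> building_edges OtildePlusL = {(NL, NP)})"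
proof -
  let ?l0 = "rat_line (ivec 1 0 0 0 0 0)" and ?P0 = "rat_plane (ivec 1 0 0 0 0 0) (ivec 0 0 1 0 0 0)"
  note mult = OtildePlusL_mult
  have "act (mat 1) ?l0 \<subseteq> ?P0" by (simp add: act_mat_1 rat_line_subset_rat_plane)
  then have "building_edges OtildePlusL = {(orbitG OtildePlusL ?l0, orbitG OtildePlusL ?P0)}"
    by (intro building_edges_singleton[OF mult iso_lines_transitive tot_iso_planes_transitive
          iso_line_standard tot_iso_plane_standard mat_1_OtildePlusL])
  moreover have "line_nodes OtildePlusL = {orbitG OtildePlusL ?l0}"
    unfolding line_nodes_def by (rule orbitG_image_singleton[OF mult iso_lines_transitive iso_line_standard])
  moreover have "plane_nodes OtildePlusL = {orbitG OtildePlusL ?P0}"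
    unfolding plane_nodes_def
    by (rule orbitG_image_singleton[OF mult tot_iso_planes_transitive tot_iso_plane_standard])
  ultimately show ?thesis using iso_lines_transitive tot_iso_planes_transitive by blast
qed

end
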